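(* A finite simple graph $G$ is a linear forest (a disjoint union of paths) if and only if it admits an $LF$-free circular ordering.
   Context: A circular ordering of a finite set is obtained by placing its elements at distinct points of a circle. A circularly ordered graph is a graph with a circular ordering of its vertices; isomorphism means a graph isomorphism preserving circular orderings; induced circularly ordered subgraphs are induced subgraphs with the restricted ordering. A circular ordering $C$ of $V(G)$ is $LF$-free if no induced circularly ordered subgraph of $(G,C)$ is isomorphic to a member of $LF$. $LF$ consists of the following circularly ordered graphs (vertices $v_1,v_2,\dots$ clockwise in this order; the listed edges are all edges): the triangle on $v_1,v_2,v_3$; on $v_1,\dots,v_4$: edges $v_1v_2,v_2v_3,v_3v_4,v_4v_1$ (simple $C_4$); edges $v_1v_2,v_2v_4,v_4v_3,v_3v_1$ (the other circular ordering of $C_4$); edges $v_1v_2,v_2v_3,v_3v_4$ (simple $P_4$); edges $v_3v_1,v_1v_4,v_4v_2$ (crossed $P_4$); edges $v_3v_1,v_3v_2,v_3v_4$ (the claw). *)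

theory Defs
  imports Main
begin

definition simple_graph :: "'a set \<Rightarrow> ('a \<Rightarrow> 'a \<Rightarrow> bool) \<Rightarrow> bool" where
  "simple_graph V E \<longleftrightarrow> finite V \<and> (\<forall>x y. E x y \<longrightarrow> x \<in> V \<and> y \<in> V)
     \<and> (\<forall>x y. E x y \<longrightarrow> E y x) \<and> (\<forall>x. \<not> E x x)"

definition induces_path :: "('a \<Rightarrow> 'a \<Rightarrow> bool) \<Rightarrow> 'a set \<Rightarrow> bool" where
  "induces_path E S \<longleftrightarrow> (\<exists>p. distinct p \<and> set p = S \<and>
     (\<forall>x\<in>S. \<forall>y\<in>S. E x y \<longleftrightarrow> (\<exists>i. Suc i < length p \<and> {p ! i, p ! Suc i} = {x, y})))"

definition component :: "('a \<Rightarrow> 'a \<Rightarrow> bool) \<Rightarrow> 'a \<Rightarrow> 'a set" where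
  "component E x = {y. E\<^sup>*\<^sup>* x y}"

definition linear_forest :: "'a set \<Rightarrow> ('a \<Rightarrow> 'a \<Rightarrow> bool) \<Rightarrow> bool" where
  "linear_forest V E \<longleftrightarrow> (\<forall>x\<in>V. induces_path E (component E x))"

(* A circular ordering of V is represented by a numbering pos : V -> {0..<|V|}
   read clockwise around the circle (the cut point is irrelevant since all
   notions below are rotation invariant). *)
definition circ_ordering :: "'a set \<Rightarrow> ('a \<Rightarrow> nat) \<Rightarrow> bool" where
  "circ_ordering V pos \<longleftrightarrow> bij_betw pos V {0..<card V}"

definition clockwise :: "('a \<Rightarrow> nat) \<Rightarrow> 'a list \<Rightarrow> bool" where
  "clockwise pos us \<longleftrightarrow>
     (\<exists>j\<le>length us. sorted_wrt (<) (map pos (drop j us @ take j us)))"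

(* A circularly ordered pattern: k vertices v_0,...,v_{k-1} clockwise,
   F the (undirected) edge set on indices. *)
type_synonym pattern = "nat \<times> (nat \<times> nat) set"

definition pat_adj :: "(nat \<times> nat) set \<Rightarrow> nat \<Rightarrow> nat \<Rightarrow> bool" where
  "pat_adj F i j \<longleftrightarrow> (i, j) \<in> F \<or> (j, i) \<in> F"

definition contains_pattern ::
  "'a set \<Rightarrow> ('a \<Rightarrow> 'a \<Rightarrow> bool) \<Rightarrow> ('a \<Rightarrow> nat) \<Rightarrow> pattern \<Rightarrow> bool" where
  "contains_pattern V E pos P \<longleftrightarrow> (\<exists>us. length us = fst P \<and> distinct us \<and> set us \<subseteq> V \<and>
     clockwise pos us \<and>
     (\<forall>i<fst P. \<forall>j<fst P. i \<noteq> j \<longrightarrow> (E (us ! i) (us ! j) \<longleftrightarrow> pat_adj (snd P) i j)))"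

(* The family LF (indices 0-based: v_1 = 0, v_2 = 1, ...) *)
definition LF :: "pattern set" where
  "LF = {(3, {(0,1),(1,2),(2,0)}),          \<comment> \<open>triangle\<close>
         (4, {(0,1),(1,2),(2,3),(3,0)}),    \<comment> \<open>simple C4\<close>
         (4, {(0,1),(1,3),(3,2),(2,0)}),    \<comment> \<open>other circular ordering of C4\<close>
         (4, {(0,1),(1,2),(2,3)}),          \<comment> \<open>simple P4\<close>
         (4, {(2,0),(0,3),(3,1)}),          \<comment> \<open>crossed P4\<close>
         (4, {(2,0),(2,1),(2,3)})}"

definition LF_free :: "'a set \<Rightarrow> ('a \<Rightarrow> 'a \<Rightarrow> bool) \<Rightarrow> ('a \<Rightarrow> nat) \<Rightarrow> bool" where
  "LF_free V E pos \<longleftrightarrow> (\<forall>P\<in>LF. \<not> contains_pattern V E pos P)"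

end

theory Submission
  imports Defs
begin

(* Linear forest => LF-free ordering: put the components on consecutive arcs and lay each path
   v_0 ... v_{n-1} out clockwise as v_0, v_2, v_4, ..., v_5, v_3, v_1.  Consecutive edges of a
   path then form nested chords, which puts the two ends of every induced P4 on opposite sides
   of its middle edge; together with the absence of triangles, 4-cycles and claws this is all
   that LF-freeness demands.

   LF-free ordering => linear forest: conversely LF-freeness yields exactly these four local
   conditions.  If some nonempty vertex set S had no vertex with at most one neighbour in S,
   take an edge of S whose clockwise arc contains the fewest vertices and extend it on both sides
   to an induced P4 inside S: one of its ends lies on that arc and spans an edge with a shorter
   arc.  A graph of maximum degree 2 in which every nonempty S has such a vertex is a linear
   forest, by peeling off leaves. *)

section \<open>Positions on the circle\<close>

(* x lies on the open clockwise arc from a to b (positions increase clockwise and wrap around) *)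
definition cyc_between :: "nat \<Rightarrow> nat \<Rightarrow> nat \<Rightarrow> bool" where
  "cyc_between a x b \<longleftrightarrow> a < x \<and> x < b \<or> b < a \<and> a < x \<or> x < b \<and> b < a"

lemma cyc_between_swap: "distinct [a, x, b] \<Longrightarrow> cyc_between a x b \<longleftrightarrow> \<not> cyc_between b x a"
  unfolding cyc_between_def by auto

lemma cyc_between_add: "cyc_between (k + a) (k + x) (k + b) \<longleftrightarrow> cyc_between a x b"
  unfolding cyc_between_def by auto

lemma clockwise_3: "clockwise pos [a, b, c] \<longleftrightarrow> cyc_between (pos a) (pos b) (pos c)"
  unfolding clockwise_def cyc_between_def
  by (simp add: numeral_eq_Suc le_Suc_eq conj_disj_distribR ex_disj_distrib) (auto; linarith)

lemma clockwise_4: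
  "clockwise pos [a, b, c, d] \<longleftrightarrow> cyc_between (pos a) (pos b) (pos c) \<and> cyc_between (pos a) (pos c) (pos d)"
  unfolding clockwise_def cyc_between_def
  by (simp add: numeral_eq_Suc le_Suc_eq conj_disj_distribR ex_disj_distrib)
    (rule iffI; elim disjE conjE; linarith)

lemma clockwise_4_rotate: "clockwise pos [a, b, c, d] \<longleftrightarrow> clockwise pos [b, c, d, a]"
  unfolding clockwise_4 cyc_between_def by presburger

lemma clockwise_3_cases:
  "distinct (map pos [a, b, c]) \<Longrightarrow> clockwise pos [a, b, c] \<or> clockwise pos [a, c, b]"
  unfolding clockwise_3 cyc_between_def by auto

lemma clockwise_4_cases:
  assumes "distinct (map pos [a, b, c, d])"
  shows "clockwise pos [a, b, c, d] \<or> clockwise pos [a, b, d, c] \<or> clockwise pos [a, c, b, d] \<or>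
    clockwise pos [a, c, d, b] \<or> clockwise pos [a, d, b, c] \<or> clockwise pos [a, d, c, b]"
  using assms unfolding clockwise_4 cyc_between_def
  by (simp only: distinct.simps list.set list.map insert_iff empty_iff de_Morgan_disj) presburger

lemma clockwise_4_chords:
  assumes "clockwise pos [a, b, c, d]"
  shows "\<not> cyc_between (pos b) (pos a) (pos c)" "\<not> cyc_between (pos b) (pos d) (pos c)"
    "cyc_between (pos a) (pos b) (pos d)" "cyc_between (pos a) (pos c) (pos d)"
  using assms unfolding clockwise_4 cyc_between_def by presburger+

lemma clockwise_4_same_side_cases:
  assumes "distinct (map pos [a, b, c, d])"
    and "cyc_between (pos b) (pos a) (pos c) \<longleftrightarrow> cyc_between (pos b) (pos d) (pos c)"
  shows "clockwise pos [a, b, c, d] \<or> clockwise pos [d, c, b, a] \<or> clockwise pos [b, d, a, c] \<or>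
    clockwise pos [c, a, d, b]"
  using assms unfolding clockwise_4 cyc_between_def
  by (simp only: distinct.simps list.set list.map insert_iff empty_iff de_Morgan_disj) presburger

section \<open>The forbidden patterns\<close>

definition clockwise_in :: "'a set \<Rightarrow> ('a \<Rightarrow> nat) \<Rightarrow> 'a list \<Rightarrow> bool" where
  "clockwise_in V pos us \<longleftrightarrow> distinct us \<and> set us \<subseteq> V \<and> clockwise pos us"

lemma ex_length_3: "(\<exists>us. length us = 3 \<and> P us) \<longleftrightarrow> (\<exists>a b c. P [a, b, c])"
  by (fastforce simp: numeral_eq_Suc length_Suc_conv)

lemma ex_length_4: "(\<exists>us. length us = 4 \<and> P us) \<longleftrightarrow> (\<exists>a b c d. P [a, b, c, d])"
  by (fastforce simp: numeral_eq_Suc length_Suc_conv)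

lemma all_pairs_less_3:
  assumes "\<And>i j. Q i j \<longleftrightarrow> Q j i"
  shows "(\<forall>i<3::nat. \<forall>j<3. i \<noteq> j \<longrightarrow> Q i j) \<longleftrightarrow> Q 0 1 \<and> Q 0 2 \<and> Q 1 2"
  using assms by (auto simp: numeral_eq_Suc All_less_Suc)

lemma all_pairs_less_4:
  assumes "\<And>i j. Q i j \<longleftrightarrow> Q j i"
  shows "(\<forall>i<4::nat. \<forall>j<4. i \<noteq> j \<longrightarrow> Q i j) \<longleftrightarrow> Q 0 1 \<and> Q 0 2 \<and> Q 0 3 \<and> Q 1 2 \<and> Q 1 3 \<and> Q 2 3"
  using assms by (auto simp: numeral_eq_Suc All_less_Suc)

lemma contains_pattern_3:
  assumes "symp E"
  shows "contains_pattern V E pos (3, F) \<longleftrightarrow> (\<exists>a b c. clockwise_in V pos [a, b, c] \<and>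
    (E a b \<longleftrightarrow> pat_adj F 0 1) \<and> (E a c \<longleftrightarrow> pat_adj F 0 2) \<and> (E b c \<longleftrightarrow> pat_adj F 1 2))"
proof -
  have "(E (us ! i) (us ! j) \<longleftrightarrow> pat_adj F i j) \<longleftrightarrow> (E (us ! j) (us ! i) \<longleftrightarrow> pat_adj F j i)" for us i j
    using assms unfolding pat_adj_def by (auto dest: sympD)
  then show ?thesis
    unfolding contains_pattern_def clockwise_in_def fst_conv snd_conv conj_assoc ex_length_3
    by (simp add: all_pairs_less_3[where Q = "\<lambda>i j. E (_ ! i) (_ ! j) \<longleftrightarrow> pat_adj F i j"])
qed

lemma contains_pattern_4:
  assumes "symp E"
  shows "contains_pattern V E pos (4, F) \<longleftrightarrow> (\<exists>a b c d. clockwise_in V pos [a, b, c, d] \<and>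
    (E a b \<longleftrightarrow> pat_adj F 0 1) \<and> (E a c \<longleftrightarrow> pat_adj F 0 2) \<and> (E a d \<longleftrightarrow> pat_adj F 0 3) \<and>
    (E b c \<longleftrightarrow> pat_adj F 1 2) \<and> (E b d \<longleftrightarrow> pat_adj F 1 3) \<and> (E c d \<longleftrightarrow> pat_adj F 2 3))"
proof -
  have "(E (us ! i) (us ! j) \<longleftrightarrow> pat_adj F i j) \<longleftrightarrow> (E (us ! j) (us ! i) \<longleftrightarrow> pat_adj F j i)" for us i j
    using assms unfolding pat_adj_def by (auto dest: sympD)
  then show ?thesis
    unfolding contains_pattern_def clockwise_in_def fst_conv snd_conv conj_assoc ex_length_4
    by (simp add: all_pairs_less_4[where Q = "\<lambda>i j. E (_ ! i) (_ ! j) \<longleftrightarrow> pat_adj F i j"])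
qed

(* One conjunct per member of LF, in the order of its definition; the 4-vertex ones list the
   pairs ab, ac, ad, bc, bd, cd. *)
lemma LF_free_iff:
  assumes "symp E"
  shows "LF_free V E pos \<longleftrightarrow>
    (\<nexists>a b c. clockwise_in V pos [a, b, c] \<and> E a b \<and> E a c \<and> E b c) \<and>
    (\<nexists>a b c d. clockwise_in V pos [a, b, c, d] \<and>
       E a b \<and> \<not> E a c \<and> E a d \<and> E b c \<and> \<not> E b d \<and> E c d) \<and>
    (\<nexists>a b c d. clockwise_in V pos [a, b, c, d] \<and>
       E a b \<and> E a c \<and> \<not> E a d \<and> \<not> E b c \<and> E b d \<and> E c d) \<and>
    (\<nexists>a b c d. clockwise_in V pos [a, b, c, d] \<and>
       E a b \<and> \<not> E a c \<and> \<not> E a d \<and> E b c \<and> \<not> E b d \<and> E c d) \<and>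
    (\<nexists>a b c d. clockwise_in V pos [a, b, c, d] \<and>
       \<not> E a b \<and> E a c \<and> E a d \<and> \<not> E b c \<and> E b d \<and> \<not> E c d) \<and>
    (\<nexists>a b c d. clockwise_in V pos [a, b, c, d] \<and>
       \<not> E a b \<and> E a c \<and> \<not> E a d \<and> E b c \<and> \<not> E b d \<and> E c d)"
  unfolding LF_free_def LF_def
  by (simp add: contains_pattern_3[OF assms] contains_pattern_4[OF assms] pat_adj_def)

section \<open>LF-freeness as local conditions\<close>

definition triangle_free :: "('a \<Rightarrow> 'a \<Rightarrow> bool) \<Rightarrow> bool" where
  "triangle_free E \<longleftrightarrow> (\<forall>a b c. E a b \<longrightarrow> E b c \<longrightarrow> \<not> E a c)"

definition max_degree_2 :: "('a \<Rightarrow> 'a \<Rightarrow> bool) \<Rightarrow> bool" where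
  "max_degree_2 E \<longleftrightarrow> (\<forall>x a b c. E x a \<longrightarrow> E x b \<longrightarrow> E x c \<longrightarrow> a = b \<or> a = c \<or> b = c)"

definition C4_free :: "('a \<Rightarrow> 'a \<Rightarrow> bool) \<Rightarrow> bool" where
  "C4_free E \<longleftrightarrow> (\<forall>a b c d. E a b \<longrightarrow> E b c \<longrightarrow> E c d \<longrightarrow> E d a \<longrightarrow> a = c \<or> b = d)"

definition induced_P4 :: "('a \<Rightarrow> 'a \<Rightarrow> bool) \<Rightarrow> 'a \<Rightarrow> 'a \<Rightarrow> 'a \<Rightarrow> 'a \<Rightarrow> bool" where
  "induced_P4 E a b c d \<longleftrightarrow>
     distinct [a, b, c, d] \<and> E a b \<and> E b c \<and> E c d \<and> \<not> E a c \<and> \<not> E b d \<and> \<not> E a d"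

definition P4_ends_separated :: "'a set \<Rightarrow> ('a \<Rightarrow> 'a \<Rightarrow> bool) \<Rightarrow> ('a \<Rightarrow> nat) \<Rightarrow> bool" where
  "P4_ends_separated V E pos \<longleftrightarrow> (\<forall>a\<in>V. \<forall>b\<in>V. \<forall>c\<in>V. \<forall>d\<in>V. induced_P4 E a b c d \<longrightarrow>
     (cyc_between (pos b) (pos a) (pos c) \<longleftrightarrow> \<not> cyc_between (pos b) (pos d) (pos c)))"

lemma simple_graph_symp: "simple_graph V E \<Longrightarrow> symp E"
  unfolding simple_graph_def by (auto intro: sympI)

lemma simple_graph_sym: "simple_graph V E \<Longrightarrow> E x y \<Longrightarrow> E y x"
  unfolding simple_graph_def by blast

lemma simple_graph_irrefl: "simple_graph V E \<Longrightarrow> \<not> E x x"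
  unfolding simple_graph_def by blast

lemma simple_graph_edge_in: "simple_graph V E \<Longrightarrow> E x y \<Longrightarrow> x \<in> V \<and> y \<in> V"
  unfolding simple_graph_def by blast

lemma LF_free_if_local:
  assumes G: "simple_graph V E" and tri: "triangle_free E" and deg: "max_degree_2 E"
    and C4: "C4_free E" and sep: "P4_ends_separated V E pos"
  shows "LF_free V E pos"
  unfolding LF_free_iff[OF simple_graph_symp[OF G]] clockwise_in_def
proof (intro conjI notI; elim exE conjE)
  fix a b c assume "E a b" "E a c" "E b c"
  then show False using tri unfolding triangle_free_def by blast
next
  fix a b c d assume "distinct [a, b, c, d]" "E a b" "E a d" "E b c" "E c d"
  then show False
    using C4[unfolded C4_free_def, rule_format, of a b c d] simple_graph_sym[OF G, of a d] by auto
next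
  fix a b c d assume "distinct [a, b, c, d]" "E a b" "E a c" "E b d" "E c d"
  then show False
    using C4[unfolded C4_free_def, rule_format, of a b d c] simple_graph_sym[OF G, of c d]
      simple_graph_sym[OF G, of a c] by auto
next
  fix a b c d assume "distinct [a, b, c, d]" "set [a, b, c, d] \<subseteq> V" "clockwise pos [a, b, c, d]"
    "E a b" "\<not> E a c" "\<not> E a d" "E b c" "\<not> E b d" "E c d"
  then have "cyc_between (pos b) (pos a) (pos c) \<longleftrightarrow> \<not> cyc_between (pos b) (pos d) (pos c)"
    using sep unfolding P4_ends_separated_def induced_P4_def by simp
  then show False using clockwise_4_chords[OF \<open>clockwise pos [a, b, c, d]\<close>] by blast
next
  fix a b c d assume "distinct [a, b, c, d]" "set [a, b, c, d] \<subseteq> V" "clockwise pos [a, b, c, d]"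
    "\<not> E a b" "E a c" "E a d" "\<not> E b c" "E b d" "\<not> E c d"
  then have "induced_P4 E c a d b"
    unfolding induced_P4_def
    using simple_graph_sym[OF G, of a c] simple_graph_sym[OF G, of c b] simple_graph_sym[OF G, of b d]
    by auto
  then have "cyc_between (pos a) (pos c) (pos d) \<longleftrightarrow> \<not> cyc_between (pos a) (pos b) (pos d)"
    using sep \<open>set [a, b, c, d] \<subseteq> V\<close> unfolding P4_ends_separated_def by simp
  then show False using clockwise_4_chords[OF \<open>clockwise pos [a, b, c, d]\<close>] by blast
next
  fix a b c d assume "distinct [a, b, c, d]" "E a c" "E b c" "E c d"
  then show False
    using deg[unfolded max_degree_2_def, rule_format, of c a b d]
      simple_graph_sym[OF G, of a c] simple_graph_sym[OF G, of b c] by auto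
qed

context
  fixes V :: "'a set" and E :: "'a \<Rightarrow> 'a \<Rightarrow> bool" and pos :: "'a \<Rightarrow> nat"
  assumes G: "simple_graph V E" and inj: "inj_on pos V" and lf: "LF_free V E pos"
begin

private lemmas sym = simple_graph_sym[OF G]
  and irrefl = simple_graph_irrefl[OF G]

private lemma in_V: "E x y \<Longrightarrow> x \<in> V" "E x y \<Longrightarrow> y \<in> V"
  using simple_graph_edge_in[OF G] by blast+

private lemma distinct_pos: "distinct us \<Longrightarrow> set us \<subseteq> V \<Longrightarrow> distinct (map pos us)"
  using inj by (simp add: distinct_map inj_on_subset)

private lemmas forbidden = lf[unfolded LF_free_iff[OF simple_graph_symp[OF G]] clockwise_in_def]

private lemma no_triangle:
  "distinct [a, b, c] \<Longrightarrow> set [a, b, c] \<subseteq> V \<Longrightarrow> clockwise pos [a, b, c] \<Longrightarrow>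
    E a b \<Longrightarrow> E a c \<Longrightarrow> E b c \<Longrightarrow> False"
  using forbidden by meson

private lemma no_simple_C4:
  "distinct [a, b, c, d] \<Longrightarrow> set [a, b, c, d] \<subseteq> V \<Longrightarrow> clockwise pos [a, b, c, d] \<Longrightarrow>
    E a b \<Longrightarrow> \<not> E a c \<Longrightarrow> E a d \<Longrightarrow> E b c \<Longrightarrow> \<not> E b d \<Longrightarrow> E c d \<Longrightarrow> False"
  using forbidden by meson

private lemma no_other_C4:
  "distinct [a, b, c, d] \<Longrightarrow> set [a, b, c, d] \<subseteq> V \<Longrightarrow> clockwise pos [a, b, c, d] \<Longrightarrow>
    E a b \<Longrightarrow> E a c \<Longrightarrow> \<not> E a d \<Longrightarrow> \<not> E b c \<Longrightarrow> E b d \<Longrightarrow> E c d \<Longrightarrow> False"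
  using forbidden by meson

private lemma no_simple_P4:
  "distinct [a, b, c, d] \<Longrightarrow> set [a, b, c, d] \<subseteq> V \<Longrightarrow> clockwise pos [a, b, c, d] \<Longrightarrow>
    E a b \<Longrightarrow> \<not> E a c \<Longrightarrow> \<not> E a d \<Longrightarrow> E b c \<Longrightarrow> \<not> E b d \<Longrightarrow> E c d \<Longrightarrow> False"
  using forbidden by meson

private lemma no_crossed_P4:
  "distinct [a, b, c, d] \<Longrightarrow> set [a, b, c, d] \<subseteq> V \<Longrightarrow> clockwise pos [a, b, c, d] \<Longrightarrow>
    \<not> E a b \<Longrightarrow> E a c \<Longrightarrow> E a d \<Longrightarrow> \<not> E b c \<Longrightarrow> E b d \<Longrightarrow> \<not> E c d \<Longrightarrow> False"
  using forbidden by meson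

private lemma no_claw:
  "distinct [a, b, c, d] \<Longrightarrow> set [a, b, c, d] \<subseteq> V \<Longrightarrow> clockwise pos [a, b, c, d] \<Longrightarrow>
    \<not> E a b \<Longrightarrow> E a c \<Longrightarrow> \<not> E a d \<Longrightarrow> E b c \<Longrightarrow> \<not> E b d \<Longrightarrow> E c d \<Longrightarrow> False"
  using forbidden by meson

lemma triangle_free_if_LF_free: "triangle_free E"
  unfolding triangle_free_def
proof (intro allI impI notI)
  fix a b c assume ab: "E a b" and bc: "E b c" and ac: "E a c"
  then have abc: "distinct [a, b, c]" "set [a, b, c] \<subseteq> V"
    using irrefl in_V by auto
  then consider "clockwise pos [a, b, c]" | "clockwise pos [a, c, b]"
    using clockwise_3_cases[OF distinct_pos] by blast
  then show False
  proof cases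
    case 1
    then show False using no_triangle[OF abc] ab ac bc by blast
  next
    case 2
    then show False using no_triangle[of a c b] abc ab ac sym[OF bc] by auto
  qed
qed

lemma max_degree_2_if_LF_free: "max_degree_2 E"
  unfolding max_degree_2_def
proof (intro allI impI)
  fix x a b c assume xa: "E x a" and xb: "E x b" and xc: "E x c"
  show "a = b \<or> a = c \<or> b = c"
  proof (rule ccontr)
    assume "\<not> (a = b \<or> a = c \<or> b = c)"
    then have xabc: "distinct [x, a, b, c]" "set [x, a, b, c] \<subseteq> V"
      using xa xb xc irrefl in_V by auto
    have leaves: "\<not> E u v" if "E x u" "E x v" for u v
      using triangle_free_if_LF_free sym[OF that(1)] that(2) unfolding triangle_free_def by blast
    have no_claw_at: False
      if "clockwise pos [x, u, v, w]" "distinct [u, v, w]" "{u, v, w} \<subseteq> {a, b, c}" for u v w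
    proof -
      \<comment> \<open>LF lists the claw with its centre in third position\<close>
      have "clockwise pos [v, w, x, u]"
        using that(1) clockwise_4_rotate[of pos x u v w] clockwise_4_rotate[of pos u v w x] by blast
      moreover have "E x u" "E x v" "E x w"
        using that(3) xa xb xc by auto
      ultimately show False
        using no_claw[of v w x u] sym[of x v] sym[of x w] leaves[of v w] leaves[of v u] leaves[of w u]
          that(2,3) xabc by auto
    qed
    show False
      using clockwise_4_cases[OF distinct_pos[OF xabc]] xabc
        no_claw_at[of a b c] no_claw_at[of a c b] no_claw_at[of b a c]
        no_claw_at[of b c a] no_claw_at[of c a b] no_claw_at[of c b a]
      by auto
  qed
qed

lemma C4_free_if_LF_free: "C4_free E"
  unfolding C4_free_def
proof (intro allI impI)
  fix a b c d assume ab: "E a b" and bc: "E b c" and cd: "E c d" and da: "E d a"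
  show "a = c \<or> b = d"
  proof (rule ccontr)
    assume "\<not> (a = c \<or> b = d)"
    then have abcd: "distinct [a, b, c, d]" "set [a, b, c, d] \<subseteq> V"
      using ab bc cd da irrefl in_V by auto
    have "\<not> E a c" "\<not> E c a" "\<not> E b d" "\<not> E d b"
      using triangle_free_if_LF_free ab bc cd sym unfolding triangle_free_def by blast+
    note edges = this ab bc cd da sym[OF ab] sym[OF bc] sym[OF cd] sym[OF da]
    show False
      using clockwise_4_cases[OF distinct_pos[OF abcd]] abcd edges
        no_simple_C4[of a b c d] no_simple_C4[of a d c b] no_other_C4[of a b d c] no_other_C4[of a d b c]
        no_other_C4[of d a c b] no_other_C4[of b a c d]
        clockwise_4_rotate[of pos d a c b] clockwise_4_rotate[of pos b a c d]
      by auto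
  qed
qed

lemma P4_ends_separated_if_LF_free: "P4_ends_separated V E pos"
  unfolding P4_ends_separated_def
proof (intro ballI impI)
  fix a b c d assume V: "a \<in> V" "b \<in> V" "c \<in> V" "d \<in> V" and P4: "induced_P4 E a b c d"
  show "cyc_between (pos b) (pos a) (pos c) \<longleftrightarrow> \<not> cyc_between (pos b) (pos d) (pos c)"
  proof (rule ccontr)
    assume "\<not> ?thesis"
    then have same_side: "cyc_between (pos b) (pos a) (pos c) \<longleftrightarrow> cyc_between (pos b) (pos d) (pos c)"
      by blast
    have abcd: "distinct [a, b, c, d]" "set [a, b, c, d] \<subseteq> V"
      using P4 V unfolding induced_P4_def by auto
    have edges: "E a b" "E b c" "E c d" "\<not> E a c" "\<not> E b d" "\<not> E a d"
      "E b a" "E c b" "E d c" "\<not> E c a" "\<not> E d b" "\<not> E d a"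
      using P4 sym unfolding induced_P4_def by blast+
    show False
      using clockwise_4_same_side_cases[OF distinct_pos[OF abcd] same_side] abcd edges
        no_simple_P4[of a b c d] no_simple_P4[of d c b a] no_crossed_P4[of b d a c] no_crossed_P4[of c a d b]
      by auto
  qed
qed

end

section \<open>Induced paths and components\<close>

definition path_indexing :: "('a \<Rightarrow> 'a \<Rightarrow> bool) \<Rightarrow> 'a set \<Rightarrow> ('a \<Rightarrow> nat) \<Rightarrow> bool" where
  "path_indexing E S ix \<longleftrightarrow> bij_betw ix S {..<card S} \<and>
     (\<forall>a\<in>S. \<forall>b\<in>S. E a b \<longleftrightarrow> ix b = Suc (ix a) \<or> ix a = Suc (ix b))"

lemma consecutive_in_distinct_list:
  assumes "distinct p" "i < length p" "j < length p"
  shows "(\<exists>k. Suc k < length p \<and> {p ! k, p ! Suc k} = {p ! i, p ! j}) \<longleftrightarrow> j = Suc i \<or> i = Suc j"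
proof -
  have "{p ! k, p ! Suc k} = {p ! i, p ! j} \<longleftrightarrow> k = i \<and> Suc k = j \<or> k = j \<and> Suc k = i"
    if "Suc k < length p" for k
    using that assms by (auto simp: doubleton_eq_iff nth_eq_iff_index_eq)
  then show ?thesis
    using assms by metis
qed

lemma induces_path_iff_indexing: "induces_path E S \<longleftrightarrow> (\<exists>ix. path_indexing E S ix)"
proof
  assume "induces_path E S"
  then obtain p where p: "distinct p" "set p = S"
    and edges: "\<forall>x\<in>S. \<forall>y\<in>S. E x y \<longleftrightarrow> (\<exists>k. Suc k < length p \<and> {p ! k, p ! Suc k} = {x, y})"
    unfolding induces_path_def by blast
  define ix where "ix = inv_into {..<length p} ((!) p)"
  have nth: "bij_betw ((!) p) {..<length p} S"
    using p by (intro bij_betw_nth) auto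
  have ix_nth: "ix (p ! i) = i" if "i < length p" for i
    unfolding ix_def using bij_betw_inv_into_left[OF nth] that by simp
  have "card S = length p"
    using p distinct_card by metis
  then have "bij_betw ix S {..<card S}"
    unfolding ix_def by (simp add: bij_betw_inv_into[OF nth])
  moreover have "E a b \<longleftrightarrow> ix b = Suc (ix a) \<or> ix a = Suc (ix b)" if ab: "a \<in> S" "b \<in> S" for a b
  proof -
    obtain i j where "i < length p" "j < length p" "a = p ! i" "b = p ! j"
      using ab p(2) by (auto simp: in_set_conv_nth)
    then show ?thesis
      using edges ab consecutive_in_distinct_list[OF p(1)] ix_nth by simp
  qed
  ultimately show "\<exists>ix. path_indexing E S ix"
    unfolding path_indexing_def by blast
next
  assume "\<exists>ix. path_indexing E S ix"
  then obtain ix where bij: "bij_betw ix S {..<card S}"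
    and edges: "\<forall>a\<in>S. \<forall>b\<in>S. E a b \<longleftrightarrow> ix b = Suc (ix a) \<or> ix a = Suc (ix b)"
    unfolding path_indexing_def by blast
  define p where "p = map (inv_into S ix) [0..<card S]"
  have inv: "bij_betw (inv_into S ix) {..<card S} S"
    by (rule bij_betw_inv_into[OF bij])
  have p: "distinct p" "set p = S" "length p = card S"
    using inv unfolding p_def bij_betw_def by (auto simp: distinct_map atLeast0LessThan)
  have p_ix: "p ! ix a = a" and ix_less: "ix a < length p" if "a \<in> S" for a
    using that bij bij_betw_apply[OF bij that] p(3)
    by (auto simp: p_def bij_betw_inv_into_left)
  have "E a b \<longleftrightarrow> (\<exists>k. Suc k < length p \<and> {p ! k, p ! Suc k} = {a, b})" if "a \<in> S" "b \<in> S" for a b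
    using consecutive_in_distinct_list[OF p(1) ix_less ix_less, of a b] edges that p_ix by simp
  then show "induces_path E S"
    unfolding induces_path_def using p by blast
qed

lemma path_indexing_edge:
  "path_indexing E S ix \<Longrightarrow> a \<in> S \<Longrightarrow> b \<in> S \<Longrightarrow> E a b \<longleftrightarrow> ix b = Suc (ix a) \<or> ix a = Suc (ix b)"
  unfolding path_indexing_def by blast

lemma path_indexing_inj: "path_indexing E S ix \<Longrightarrow> inj_on ix S"
  unfolding path_indexing_def bij_betw_def by blast

lemma path_indexing_cong:
  "(\<And>a b. a \<in> S \<Longrightarrow> b \<in> S \<Longrightarrow> E a b \<longleftrightarrow> E' a b) \<Longrightarrow> path_indexing E S ix \<longleftrightarrow> path_indexing E' S ix"
  unfolding path_indexing_def by simp

lemma path_indexing_finite: "path_indexing E S ix \<Longrightarrow> finite S"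
  unfolding path_indexing_def using bij_betw_finite by blast

lemma path_indexing_singleton: "\<not> E v v \<Longrightarrow> path_indexing E {v} (\<lambda>_. 0)"
  unfolding path_indexing_def by (simp add: bij_betw_def lessThan_Suc)

lemma path_indexing_reverse:
  assumes "path_indexing E S ix"
  shows "path_indexing E S (\<lambda>a. card S - Suc (ix a))"
proof -
  have "bij_betw (\<lambda>i. card S - Suc i) {..<card S} {..<card S}"
    by (rule bij_betw_byWitness[where f' = "\<lambda>i. card S - Suc i"]) auto
  then have "bij_betw (\<lambda>a. card S - Suc (ix a)) S {..<card S}"
    using bij_betw_trans[of ix S "{..<card S}"] assms unfolding path_indexing_def comp_def by blast
  moreover have "(card S - Suc (ix b) = Suc (card S - Suc (ix a)) \<or>
      card S - Suc (ix a) = Suc (card S - Suc (ix b))) \<longleftrightarrow> ix b = Suc (ix a) \<or> ix a = Suc (ix b)"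
    if "a \<in> S" "b \<in> S" for a b
  proof -
    have "ix a < card S" "ix b < card S"
      using assms that unfolding path_indexing_def bij_betw_def by auto
    then show ?thesis by linarith
  qed
  ultimately show ?thesis
    using assms unfolding path_indexing_def by simp
qed

lemma path_indexing_endpoint:
  assumes ix: "path_indexing E S ix" and "u \<in> S"
    and leaf: "\<And>a b. a \<in> S \<Longrightarrow> b \<in> S \<Longrightarrow> E u a \<Longrightarrow> E u b \<Longrightarrow> a = b"
  obtains ix' where "path_indexing E S ix'" "ix' u = 0"
proof -
  have img: "ix ` S = {..<card S}"
    using ix unfolding path_indexing_def bij_betw_def by blast
  have "ix u = 0 \<or> Suc (ix u) = card S"
  proof (rule ccontr)
    assume inner: "\<not> ?thesis"
    have "ix u \<in> {..<card S}"
      using img \<open>u \<in> S\<close> by blast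
    with inner have "ix u - 1 \<in> ix ` S" "Suc (ix u) \<in> ix ` S"
      unfolding img by auto
    then obtain a b where ab: "a \<in> S" "b \<in> S" "ix a = ix u - 1" "ix b = Suc (ix u)"
      by (metis imageE)
    with inner have "E u a" "E u b"
      using path_indexing_edge[OF ix \<open>u \<in> S\<close> ab(1)] path_indexing_edge[OF ix \<open>u \<in> S\<close> ab(2)] by simp_all
    then show False
      using leaf[OF ab(1,2)] ab(3,4) by simp
  qed
  then show thesis
  proof
    assume "ix u = 0"
    then show thesis by (rule that[OF ix])
  next
    assume "Suc (ix u) = card S"
    then show thesis by (intro that[OF path_indexing_reverse[OF ix]]) simp
  qed
qed

lemma path_indexing_insert_leaf:
  assumes ix: "path_indexing E S ix" and u: "u \<in> S" "ix u = 0" and v: "v \<notin> S" "\<not> E v v"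
    and edges_v: "\<And>w. w \<in> S \<Longrightarrow> E v w \<longleftrightarrow> w = u" "\<And>w. w \<in> S \<Longrightarrow> E w v \<longleftrightarrow> w = u"
  shows "path_indexing E (insert v S) (\<lambda>w. if w = v then 0 else Suc (ix w))" (is "path_indexing E _ ?ix")
proof -
  have bij: "bij_betw ix S {..<card S}"
    using ix unfolding path_indexing_def by blast
  have card: "card (insert v S) = Suc (card S)"
    using path_indexing_finite[OF ix] v(1) by simp
  have "bij_betw Suc {..<card S} (Suc ` {..<card S})"
    by (simp add: bij_betw_imageI)
  then have "bij_betw (Suc \<circ> ix) S (Suc ` {..<card S})"
    by (rule bij_betw_trans[OF bij])
  then have "bij_betw ?ix S (Suc ` {..<card S})"
    by (rule bij_betw_cong[THEN iffD1, rotated]) (use v(1) in auto)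
  then have "bij_betw ?ix ({v} \<union> S) ({0} \<union> Suc ` {..<card S})"
    by (intro bij_betw_combine) (auto simp: bij_betw_def)
  moreover have "{0} \<union> Suc ` {..<card S} = {..<card (insert v S)}"
    unfolding card lessThan_Suc_eq_insert_0 by simp
  ultimately have "bij_betw ?ix (insert v S) {..<card (insert v S)}"
    by simp
  moreover have "w = u \<longleftrightarrow> ix w = 0" if "w \<in> S" for w
    using inj_onD[OF path_indexing_inj[OF ix]] u that by auto
  ultimately show ?thesis
    using ix v edges_v unfolding path_indexing_def by auto
qed

lemma component_refl: "x \<in> component E x"
  unfolding component_def by simp

lemma component_step: "y \<in> component E x \<Longrightarrow> E y z \<Longrightarrow> z \<in> component E x"
  unfolding component_def by (simp add: rtranclp.rtrancl_into_rtrancl)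

lemma component_eq:
  assumes "symp E" "y \<in> component E x"
  shows "component E y = component E x"
proof -
  have "E\<^sup>*\<^sup>* x y" "E\<^sup>*\<^sup>* y x"
    using assms sympD[OF symp_rtranclp[OF assms(1)]] unfolding component_def by blast+
  then show ?thesis
    unfolding component_def by (auto intro: rtranclp_trans)
qed

lemma component_subset_closed:
  assumes "\<And>y z. E y z \<Longrightarrow> y \<in> W \<Longrightarrow> z \<in> W" "x \<in> W"
  shows "component E x \<subseteq> W"
proof
  fix y assume "y \<in> component E x"
  then have "E\<^sup>*\<^sup>* x y" unfolding component_def by simp
  then show "y \<in> W"
    using assms(2) by (induction rule: rtranclp_induct) (auto intro: assms(1))
qed

lemma component_isolated:
  assumes "\<And>w. \<not> E v w"
  shows "component E v = {v}"
proof -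
  have "y = v" if "E\<^sup>*\<^sup>* v y" for y
    using that assms by (induction rule: rtranclp_induct) auto
  then show ?thesis
    unfolding component_def by auto
qed

lemma linear_forest_indexing:
  assumes "linear_forest V E" "x \<in> V"
  obtains ix where "path_indexing E (component E x) ix"
  using assms unfolding linear_forest_def induces_path_iff_indexing by blast

section \<open>An LF-free ordering of a linear forest\<close>

context
  fixes V :: "'a set" and E :: "'a \<Rightarrow> 'a \<Rightarrow> bool"
  assumes G: "simple_graph V E" and lf: "linear_forest V E"
begin

private lemma indexing_near:
  assumes "E x y"
  obtains ix where "path_indexing E (component E x) ix" "x \<in> component E x" "y \<in> component E x"
proof -
  have "x \<in> V" using simple_graph_edge_in[OF G assms] by blast
  then obtain ix where ix: "path_indexing E (component E x) ix" by (rule linear_forest_indexing[OF lf])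
  have y: "y \<in> component E x" by (rule component_step[of x E x y, OF component_refl assms])
  show thesis by (rule that[OF ix component_refl y])
qed

lemma triangle_free_if_linear_forest: "triangle_free E"
  unfolding triangle_free_def
proof (intro allI impI notI)
  fix a b c assume ab: "E a b" and bc: "E b c" and ac: "E a c"
  obtain ix where ix: "path_indexing E (component E a) ix" and in_C: "a \<in> component E a" "b \<in> component E a"
    using indexing_near[OF ab] .
  have c: "c \<in> component E a" using component_step[OF in_C(2) bc] .
  have "ix b = Suc (ix a) \<or> ix a = Suc (ix b)" "ix c = Suc (ix b) \<or> ix b = Suc (ix c)"
    "ix c = Suc (ix a) \<or> ix a = Suc (ix c)"
    using path_indexing_edge[OF ix in_C] path_indexing_edge[OF ix in_C(2) c]
      path_indexing_edge[OF ix in_C(1) c] ab bc ac by simp_all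
  then show False by arith
qed

lemma max_degree_2_if_linear_forest: "max_degree_2 E"
  unfolding max_degree_2_def
proof (intro allI impI)
  fix x a b c assume xa: "E x a" and xb: "E x b" and xc: "E x c"
  obtain ix where ix: "path_indexing E (component E x) ix" and in_C: "x \<in> component E x" "a \<in> component E x"
    using indexing_near[OF xa] .
  have b: "b \<in> component E x" and c: "c \<in> component E x"
    using component_step[OF in_C(1) xb] component_step[OF in_C(1) xc] .
  have "ix a = Suc (ix x) \<or> ix x = Suc (ix a)" "ix b = Suc (ix x) \<or> ix x = Suc (ix b)"
    "ix c = Suc (ix x) \<or> ix x = Suc (ix c)"
    using path_indexing_edge[OF ix in_C] path_indexing_edge[OF ix in_C(1) b]
      path_indexing_edge[OF ix in_C(1) c] xa xb xc by simp_all
  then have "ix a = ix b \<or> ix a = ix c \<or> ix b = ix c" by arith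
  then show "a = b \<or> a = c \<or> b = c"
    using inj_onD[OF path_indexing_inj[OF ix]] in_C(2) b c by blast
qed

lemma C4_free_if_linear_forest: "C4_free E"
  unfolding C4_free_def
proof (intro allI impI)
  fix a b c d assume ab: "E a b" and bc: "E b c" and cd: "E c d" and da: "E d a"
  obtain ix where ix: "path_indexing E (component E a) ix" and in_C: "a \<in> component E a" "b \<in> component E a"
    using indexing_near[OF ab] .
  have c: "c \<in> component E a" using component_step[OF in_C(2) bc] .
  have d: "d \<in> component E a" using component_step[OF c cd] .
  have "ix b = Suc (ix a) \<or> ix a = Suc (ix b)" "ix c = Suc (ix b) \<or> ix b = Suc (ix c)"
    "ix d = Suc (ix c) \<or> ix c = Suc (ix d)" "ix a = Suc (ix d) \<or> ix d = Suc (ix a)"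
    using path_indexing_edge[OF ix in_C] path_indexing_edge[OF ix in_C(2) c]
      path_indexing_edge[OF ix c d] path_indexing_edge[OF ix d in_C(1)] ab bc cd da by simp_all
  then have "ix a = ix c \<or> ix b = ix d" by arith
  then show "a = c \<or> b = d"
    using inj_onD[OF path_indexing_inj[OF ix]] in_C c d by blast
qed

end

definition zigzag :: "nat \<Rightarrow> nat \<Rightarrow> nat" where
  "zigzag n i = (if even i then i div 2 else n - 1 - i div 2)"

lemma zigzag_inj_on: "inj_on (zigzag n) {..<n}"
  by (rule inj_onI) (auto simp: zigzag_def split: if_splits elim!: evenE oddE)

lemma zigzag_bij: "bij_betw (zigzag n) {..<n} {..<n}"
proof -
  have "zigzag n ` {..<n} \<subseteq> {..<n}"
    by (auto simp: zigzag_def)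
  then have "zigzag n ` {..<n} = {..<n}"
    using card_image[OF zigzag_inj_on] by (simp add: card_subset_eq)
  then show ?thesis
    using zigzag_inj_on unfolding bij_betw_def by blast
qed

lemma zigzag_P4:
  assumes "i + 3 < n"
  shows "cyc_between (zigzag n (i + 1)) (zigzag n i) (zigzag n (i + 2)) \<longleftrightarrow>
    \<not> cyc_between (zigzag n (i + 1)) (zigzag n (i + 3)) (zigzag n (i + 2))"
  using assms by (cases "even i") (auto simp: zigzag_def cyc_between_def elim!: evenE oddE)

lemma P4_ends_separated_zigzag:
  assumes ix: "path_indexing E C ix"
  shows "P4_ends_separated C E (\<lambda>v. k + zigzag (card C) (ix v))"
  unfolding P4_ends_separated_def cyc_between_add
proof (intro ballI impI)
  fix a b c d assume in_C: "a \<in> C" "b \<in> C" "c \<in> C" "d \<in> C" and P4: "induced_P4 E a b c d"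
  let ?z = "\<lambda>v. zigzag (card C) (ix v)"
  have less: "ix v < card C" if "v \<in> C" for v
    using ix that unfolding path_indexing_def bij_betw_def by auto
  have z_inj: "?z v = ?z w \<longleftrightarrow> v = w" if "v \<in> C" "w \<in> C" for v w
    using inj_onD[OF zigzag_inj_on] inj_onD[OF path_indexing_inj[OF ix]] less that by blast
  have "ix b = Suc (ix a) \<or> ix a = Suc (ix b)" "ix c = Suc (ix b) \<or> ix b = Suc (ix c)"
    "ix d = Suc (ix c) \<or> ix c = Suc (ix d)"
    using path_indexing_edge[OF ix] in_C P4 unfolding induced_P4_def by auto
  moreover have "ix a \<noteq> ix c" "ix b \<noteq> ix d"
    using inj_onD[OF path_indexing_inj[OF ix]] in_C P4 unfolding induced_P4_def by auto
  ultimately consider "ix b = ix a + 1" "ix c = ix a + 2" "ix d = ix a + 3"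
    | "ix c = ix d + 1" "ix b = ix d + 2" "ix a = ix d + 3"
    by arith
  then show "cyc_between (?z b) (?z a) (?z c) \<longleftrightarrow> \<not> cyc_between (?z b) (?z d) (?z c)"
  proof cases
    case 1
    then show ?thesis using zigzag_P4[of "ix a" "card C"] less[OF in_C(4)] by simp
  next
    case 2
    then have "cyc_between (?z c) (?z d) (?z b) \<longleftrightarrow> \<not> cyc_between (?z c) (?z a) (?z b)"
      using zigzag_P4[of "ix d" "card C"] less[OF in_C(1)] by simp
    moreover have "distinct [?z b, ?z a, ?z c]" "distinct [?z b, ?z d, ?z c]"
      using P4 z_inj in_C unfolding induced_P4_def by auto
    ultimately show ?thesis
      using cyc_between_swap by blast
  qed
qed

lemma P4_ends_separated_cong:
  "(\<And>v. v \<in> V \<Longrightarrow> pos v = pos' v) \<Longrightarrow> P4_ends_separated V E pos \<longleftrightarrow> P4_ends_separated V E pos'"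
  unfolding P4_ends_separated_def by simp

lemma P4_ends_separated_Un:
  assumes "P4_ends_separated A E pos" "P4_ends_separated B E pos"
    and closed: "\<And>x y. E x y \<Longrightarrow> x \<in> A \<longleftrightarrow> y \<in> A"
  shows "P4_ends_separated (A \<union> B) E pos"
  unfolding P4_ends_separated_def
proof (intro ballI impI)
  fix a b c d assume in_AB: "a \<in> A \<union> B" "b \<in> A \<union> B" "c \<in> A \<union> B" "d \<in> A \<union> B"
    and P4: "induced_P4 E a b c d"
  then have "E a b" "E b c" "E c d"
    unfolding induced_P4_def by blast+
  then have "a \<in> A \<and> b \<in> A \<and> c \<in> A \<and> d \<in> A \<or> a \<in> B \<and> b \<in> B \<and> c \<in> B \<and> d \<in> B"
    using closed in_AB by blast
  then show "cyc_between (pos b) (pos a) (pos c) \<longleftrightarrow> \<not> cyc_between (pos b) (pos d) (pos c)"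
    using assms(1,2) P4 unfolding P4_ends_separated_def by blast
qed

lemma P4_ends_separated_add_path:
  assumes pos': "bij_betw pos' W {..<card W}" "P4_ends_separated W E pos'"
    and ix: "path_indexing E C ix" and "finite W" "W \<inter> C = {}"
    and C_closed: "\<And>y z. E y z \<Longrightarrow> y \<in> C \<longleftrightarrow> z \<in> C"
  shows "\<exists>pos. bij_betw pos (W \<union> C) {..<card (W \<union> C)} \<and> P4_ends_separated (W \<union> C) E pos"
proof -
  define K where "K = card W"
  define pos where "pos v = (if v \<in> C then K + zigzag (card C) (ix v) else pos' v)" for v
  have "bij_betw (\<lambda>v. K + zigzag (card C) (ix v)) C {K..<K + card C}"
  proof -
    have "bij_betw ((+) K) {..<card C} {K..<K + card C}"
      by (rule bij_betw_imageI) (auto simp: lessThan_atLeast0 add.commute)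
    then show ?thesis
      using bij_betw_trans[OF bij_betw_trans[OF _ zigzag_bij]] ix
      unfolding path_indexing_def comp_def by blast
  qed
  then have "bij_betw pos C {K..<K + card C}"
    by (rule bij_betw_cong[THEN iffD1, rotated]) (simp add: pos_def)
  moreover have "bij_betw pos W {..<K}"
    using pos'(1) unfolding K_def
    by (rule bij_betw_cong[THEN iffD1, rotated]) (use \<open>W \<inter> C = {}\<close> in \<open>auto simp: pos_def\<close>)
  ultimately have "bij_betw pos (W \<union> C) ({..<K} \<union> {K..<K + card C})"
    by (intro bij_betw_combine) auto
  moreover have "card (W \<union> C) = K + card C"
    unfolding K_def using card_Un_disjoint[OF \<open>finite W\<close> path_indexing_finite[OF ix] \<open>W \<inter> C = {}\<close>] .
  then have "{..<K} \<union> {K..<K + card C} = {..<card (W \<union> C)}"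
    by auto
  ultimately have "bij_betw pos (W \<union> C) {..<card (W \<union> C)}"
    by simp
  moreover have "P4_ends_separated C E pos"
    using P4_ends_separated_zigzag[OF ix, of K] P4_ends_separated_cong[of C pos] by (simp add: pos_def)
  moreover have "P4_ends_separated W E pos \<longleftrightarrow> P4_ends_separated W E pos'"
    by (rule P4_ends_separated_cong) (use \<open>W \<inter> C = {}\<close> in \<open>auto simp: pos_def\<close>)
  with pos'(2) have "P4_ends_separated W E pos"
    by blast
  ultimately show ?thesis
    using P4_ends_separated_Un[of C E pos W] C_closed by (metis sup_commute)
qed

lemma separating_ordering_exists:
  assumes G: "simple_graph V E" and lf: "linear_forest V E"
    and "W \<subseteq> V" and "\<And>x y. E x y \<Longrightarrow> x \<in> W \<Longrightarrow> y \<in> W"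
  shows "\<exists>pos. bij_betw pos W {..<card W} \<and> P4_ends_separated W E pos"
proof -
  have "finite W"
    using G \<open>W \<subseteq> V\<close> finite_subset unfolding simple_graph_def by blast
  then show ?thesis
    using assms(3,4)
  proof (induction W rule: finite_psubset_induct)
    case (psubset W)
    show ?case
    proof (cases "W = {}")
      case True
      then show ?thesis by (simp add: P4_ends_separated_def bij_betw_def)
    next
      case False
      then obtain x where "x \<in> W" by blast
      define C where "C = component E x"
      have C_closed: "y \<in> C \<longleftrightarrow> z \<in> C" if "E y z" for y z
        unfolding C_def using component_step simple_graph_sym[OF G] that by metis
      have "C \<subseteq> W"
        unfolding C_def using component_subset_closed psubset.prems(2) \<open>x \<in> W\<close> by metis
      have "x \<in> C"
        unfolding C_def by (rule component_refl)
      then have "W - C \<subset> W" "W - C \<subseteq> V" "\<And>y z. E y z \<Longrightarrow> y \<in> W - C \<Longrightarrow> z \<in> W - C"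
        using psubset.prems \<open>x \<in> W\<close> C_closed by blast+
      then obtain pos' where "bij_betw pos' (W - C) {..<card (W - C)}" "P4_ends_separated (W - C) E pos'"
        using psubset.IH by blast
      moreover obtain ix where "path_indexing E C ix"
        unfolding C_def using linear_forest_indexing[OF lf] psubset.prems(1) \<open>x \<in> W\<close> by blast
      moreover have "W - C \<union> C = W"
        using \<open>C \<subseteq> W\<close> by blast
      ultimately show ?thesis
        using P4_ends_separated_add_path[of pos' "W - C" E C ix] C_closed psubset.hyps by auto
    qed
  qed
qed

section \<open>Graphs with an LF-free ordering are linear forests\<close>

definition arc :: "'a set \<Rightarrow> ('a \<Rightarrow> nat) \<Rightarrow> 'a \<Rightarrow> 'a \<Rightarrow> 'a set" where
  "arc V pos u w = {x \<in> V. cyc_between (pos u) (pos x) (pos w)}"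

lemma arc_psubset:
  assumes "m \<in> V" "cyc_between (pos u) (pos m) (pos w)"
  shows "arc V pos u m \<subset> arc V pos u w" "arc V pos m w \<subset> arc V pos u w"
  using assms unfolding arc_def cyc_between_def by auto

definition one_degenerate :: "'a set \<Rightarrow> ('a \<Rightarrow> 'a \<Rightarrow> bool) \<Rightarrow> bool" where
  "one_degenerate V E \<longleftrightarrow>
     (\<forall>S\<subseteq>V. S \<noteq> {} \<longrightarrow> (\<exists>v\<in>S. \<forall>a\<in>S. \<forall>b\<in>S. E v a \<longrightarrow> E v b \<longrightarrow> a = b))"

lemma induced_P4_if_triangle_C4_free:
  assumes G: "simple_graph V E" and tri: "triangle_free E" and C4: "C4_free E"
    and ab: "E a b" and bc: "E b c" and cd: "E c d" and "a \<noteq> c" "b \<noteq> d"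
  shows "induced_P4 E a b c d"
proof -
  have "\<not> E a c" "\<not> E b d"
    using tri ab bc cd unfolding triangle_free_def by blast+
  moreover have "a \<noteq> d"
    using \<open>\<not> E a c\<close> simple_graph_sym[OF G cd] by blast
  moreover have "\<not> E a d"
    using C4 ab bc cd simple_graph_sym[OF G] \<open>a \<noteq> c\<close> \<open>b \<noteq> d\<close> unfolding C4_free_def by blast
  ultimately show ?thesis
    unfolding induced_P4_def using ab bc cd \<open>a \<noteq> c\<close> \<open>b \<noteq> d\<close> simple_graph_irrefl[OF G] by auto
qed

lemma one_degenerate_if_P4_ends_separated:
  assumes G: "simple_graph V E" and tri: "triangle_free E" and C4: "C4_free E"
    and sep: "P4_ends_separated V E pos"
  shows "one_degenerate V E"
  unfolding one_degenerate_def
proof (intro allI impI)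
  fix S assume "S \<subseteq> V" "S \<noteq> {}"
  show "\<exists>v\<in>S. \<forall>a\<in>S. \<forall>b\<in>S. E v a \<longrightarrow> E v b \<longrightarrow> a = b"
  proof (rule ccontr)
    assume "\<not> ?thesis"
    then have branch: "\<exists>a\<in>S. E v a \<and> a \<noteq> b" if "v \<in> S" "b \<in> S" for v b
      using that by blast
    have sym: "E x y \<Longrightarrow> E y x" for x y
      using simple_graph_sym[OF G] .
    obtain u w where "u \<in> S" "w \<in> S" "E u w"
      using branch \<open>S \<noteq> {}\<close> by blast
    then obtain v1 v2 where v12: "v1 \<in> S" "v2 \<in> S" "E v1 v2"
      and min: "\<And>u w. u \<in> S \<Longrightarrow> w \<in> S \<Longrightarrow> E u w \<Longrightarrow> card (arc V pos v1 v2) \<le> card (arc V pos u w)"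
      using ex_has_least_nat[of "\<lambda>(u, w). u \<in> S \<and> w \<in> S \<and> E u w" "(u, w)"
          "\<lambda>(u, w). card (arc V pos u w)"]
      by auto
    obtain v0 where v0: "v0 \<in> S" "E v1 v0" "v0 \<noteq> v2"
      using branch[OF v12(1,2)] by blast
    obtain v3 where v3: "v3 \<in> S" "E v2 v3" "v3 \<noteq> v1"
      using branch[OF v12(2,1)] by blast
    have "induced_P4 E v0 v1 v2 v3"
      using induced_P4_if_triangle_C4_free[OF G tri C4 sym[OF v0(2)] v12(3) v3(2) v0(3) v3(3)[symmetric]] .
    moreover have in_V: "v0 \<in> V" "v1 \<in> V" "v2 \<in> V" "v3 \<in> V"
      using \<open>S \<subseteq> V\<close> v0(1) v3(1) v12(1,2) by auto
    ultimately have sides: "cyc_between (pos v1) (pos v0) (pos v2) \<or> cyc_between (pos v1) (pos v3) (pos v2)"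
      using sep[unfolded P4_ends_separated_def] by blast
    have fin: "finite (arc V pos v1 v2)"
      using G unfolding simple_graph_def arc_def by simp
    from sides show False
    proof
      assume "cyc_between (pos v1) (pos v0) (pos v2)"
      then have "card (arc V pos v1 v0) < card (arc V pos v1 v2)"
        by (intro psubset_card_mono[OF fin] arc_psubset(1) in_V(1))
      with min[OF v12(1) v0(1,2)] show False by simp
    next
      assume "cyc_between (pos v1) (pos v3) (pos v2)"
      then have "card (arc V pos v3 v2) < card (arc V pos v1 v2)"
        by (intro psubset_card_mono[OF fin] arc_psubset(2) in_V(4))
      with min[OF v3(1) v12(2) sym[OF v3(2)]] show False by simp
    qed
  qed
qed

definition delete_vertex :: "('a \<Rightarrow> 'a \<Rightarrow> bool) \<Rightarrow> 'a \<Rightarrow> 'a \<Rightarrow> 'a \<Rightarrow> bool" where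
  "delete_vertex E v x y \<longleftrightarrow> E x y \<and> x \<noteq> v \<and> y \<noteq> v"

lemma simple_graph_delete_vertex:
  "simple_graph V E \<Longrightarrow> simple_graph (V - {v}) (delete_vertex E v)"
  unfolding simple_graph_def delete_vertex_def by auto

lemma max_degree_2_delete_vertex: "max_degree_2 E \<Longrightarrow> max_degree_2 (delete_vertex E v)"
  unfolding max_degree_2_def delete_vertex_def by blast

lemma one_degenerate_delete_vertex:
  "one_degenerate V E \<Longrightarrow> one_degenerate (V - {v}) (delete_vertex E v)"
  unfolding one_degenerate_def delete_vertex_def by (meson Diff_subset subset_trans)

lemma component_delete_vertex:
  assumes "v \<notin> component E x"
  shows "component (delete_vertex E v) x = component E x"
proof
  show "component (delete_vertex E v) x \<subseteq> component E x"
    unfolding component_def delete_vertex_def by (auto elim: rtranclp_mono[THEN predicate2D, rotated])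
next
  show "component E x \<subseteq> component (delete_vertex E v) x"
  proof
    fix y assume "y \<in> component E x"
    then have "E\<^sup>*\<^sup>* x y" unfolding component_def by simp
    then show "y \<in> component (delete_vertex E v) x"
    proof (induction rule: rtranclp_induct)
      case base
      show ?case by (rule component_refl)
    next
      case (step y z)
      then have "y \<noteq> v" "z \<noteq> v"
        using assms unfolding component_def by (auto intro: rtranclp.rtrancl_into_rtrancl)
      with step show ?case
        using component_step[of y "delete_vertex E v" x z] unfolding delete_vertex_def by blast
    qed
  qed
qed

lemma not_in_component_delete_vertex:
  assumes "u \<noteq> v"
  shows "v \<notin> component (delete_vertex E v) u"
proof
  assume "v \<in> component (delete_vertex E v) u"
  then have "(delete_vertex E v)\<^sup>*\<^sup>* u v" unfolding component_def by simp
  then show False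
    using assms by (cases rule: rtranclp.cases) (auto simp: delete_vertex_def)
qed

lemma component_delete_leaf:
  assumes "E v u" "\<And>w. E v w \<Longrightarrow> w = u"
  shows "component E v = insert v (component (delete_vertex E v) u)"
proof
  show "component E v \<subseteq> insert v (component (delete_vertex E v) u)"
  proof
    fix y assume "y \<in> component E v"
    then have "E\<^sup>*\<^sup>* v y" unfolding component_def by simp
    then show "y \<in> insert v (component (delete_vertex E v) u)"
    proof (induction rule: rtranclp_induct)
      case base
      show ?case by simp
    next
      case (step y z)
      consider "z = v" | "y = v" "z \<noteq> v" | "y \<noteq> v" "z \<noteq> v" by blast
      then show ?case
      proof cases
        case 2
        then show ?thesis using step.hyps(2) assms(2) component_refl by simp
      next
        case 3
        then show ?thesis
          using step component_step[of y "delete_vertex E v" u z] unfolding delete_vertex_def by simp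
      qed simp
    qed
  qed
next
  have "component (delete_vertex E v) u \<subseteq> component E u"
    unfolding component_def delete_vertex_def by (auto elim: rtranclp_mono[THEN predicate2D, rotated])
  moreover have "component E u \<subseteq> component E v"
    unfolding component_def using assms(1) by (auto intro: converse_rtranclp_into_rtranclp)
  ultimately show "insert v (component (delete_vertex E v) u) \<subseteq> component E v"
    using component_refl[of v E] by blast
qed

lemma component_indexing_at_leaf:
  assumes G: "simple_graph V E" and deg: "max_degree_2 E" and "v \<in> V"
    and leaf: "\<And>a b. a \<in> V \<Longrightarrow> b \<in> V \<Longrightarrow> E v a \<Longrightarrow> E v b \<Longrightarrow> a = b"
    and lf: "linear_forest (V - {v}) (delete_vertex E v)"
  shows "\<exists>ix. path_indexing E (component E v) ix"
proof (cases "\<exists>u. E v u")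
  case False
  then have "component E v = {v}"
    by (intro component_isolated) blast
  then show ?thesis
    using path_indexing_singleton[of E v, OF simple_graph_irrefl[OF G]] by auto
next
  case True
  then obtain u where vu: "E v u" by blast
  have u: "u \<in> V - {v}"
    using simple_graph_edge_in[OF G vu] simple_graph_irrefl[OF G] vu by auto
  have only_u: "w = u" if "E v w" for w
    using leaf simple_graph_edge_in[OF G] that vu by blast
  define C where "C = component (delete_vertex E v) u"
  have "v \<notin> C"
    unfolding C_def using u by (simp add: not_in_component_delete_vertex)
  then have same_edges: "delete_vertex E v a b \<longleftrightarrow> E a b" if "a \<in> C" "b \<in> C" for a b
    using that unfolding delete_vertex_def by auto
  obtain ix0 where "path_indexing (delete_vertex E v) C ix0"
    unfolding C_def by (rule linear_forest_indexing[OF lf u])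
  then have ix0: "path_indexing E C ix0"
    using path_indexing_cong[of C "delete_vertex E v" E ix0, OF same_edges] by simp
  have "u \<in> C"
    unfolding C_def by (rule component_refl)
  moreover have "a = b" if "a \<in> C" "b \<in> C" "E u a" "E u b" for a b
    using deg[unfolded max_degree_2_def, rule_format, OF that(3,4) simple_graph_sym[OF G vu]]
      that(1,2) \<open>v \<notin> C\<close> by blast
  ultimately obtain ix where ix: "path_indexing E C ix" "ix u = 0"
    by (rule path_indexing_endpoint[OF ix0])
  have "component E v = insert v C"
    unfolding C_def using component_delete_leaf[of E v u, OF vu only_u] .
  moreover have "E v w \<longleftrightarrow> w = u" "E w v \<longleftrightarrow> w = u" if "w \<in> C" for w
    using only_u vu simple_graph_sym[OF G] by blast+
  ultimately show ?thesis
    using path_indexing_insert_leaf[OF ix(1) \<open>u \<in> C\<close> ix(2) \<open>v \<notin> C\<close>] simple_graph_irrefl[OF G]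
    by metis
qed

lemma component_indexing_avoiding:
  assumes lf: "linear_forest (V - {v}) (delete_vertex E v)" and "x \<in> V" and v: "v \<notin> component E x"
  shows "\<exists>ix. path_indexing E (component E x) ix"
proof -
  have "x \<noteq> v"
    using v component_refl[of x E] by (cases "x = v") simp_all
  with \<open>x \<in> V\<close> obtain ix where "path_indexing (delete_vertex E v) (component E x) ix"
    using linear_forest_indexing[OF lf, of x] unfolding component_delete_vertex[OF v] by blast
  moreover have "delete_vertex E v a b \<longleftrightarrow> E a b" if "a \<in> component E x" "b \<in> component E x" for a b
    using that v unfolding delete_vertex_def by auto
  ultimately show ?thesis
    using path_indexing_cong[of "component E x" "delete_vertex E v" E] by blast
qed

lemma linear_forest_if_one_degenerate:
  assumes "simple_graph V E" "max_degree_2 E" "one_degenerate V E"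
  shows "linear_forest V E"
  using assms
proof (induction "card V" arbitrary: V E rule: less_induct)
  case less
  note G = less.prems(1) and deg = less.prems(2) and degen = less.prems(3)
  show ?case
  proof (cases "V = {}")
    case True
    then show ?thesis unfolding linear_forest_def by simp
  next
    case False
    then obtain v where "v \<in> V" and leaf: "\<And>a b. a \<in> V \<Longrightarrow> b \<in> V \<Longrightarrow> E v a \<Longrightarrow> E v b \<Longrightarrow> a = b"
      using degen[unfolded one_degenerate_def, rule_format, OF subset_refl False] by blast
    have "card (V - {v}) < card V"
      using card_Diff1_less[OF _ \<open>v \<in> V\<close>] G unfolding simple_graph_def by blast
    then have lf: "linear_forest (V - {v}) (delete_vertex E v)"
      by (rule less.hyps[OF _ simple_graph_delete_vertex[OF G] max_degree_2_delete_vertex[OF deg]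
            one_degenerate_delete_vertex[OF degen]])
    have "\<exists>ix. path_indexing E (component E x) ix" if "x \<in> V" for x
    proof (cases "v \<in> component E x")
      case True
      then have "component E x = component E v"
        using component_eq[OF simple_graph_symp[OF G] True] by simp
      then show ?thesis
        using component_indexing_at_leaf[OF G deg \<open>v \<in> V\<close> leaf lf] by simp
    next
      case False
      then show ?thesis
        using component_indexing_avoiding[OF lf that] by blast
    qed
    then show ?thesis
      unfolding linear_forest_def induces_path_iff_indexing by blast
  qed
qed

theorem proposition5:
  fixes V :: "'a set" and E :: "'a \<Rightarrow> 'a \<Rightarrow> bool"
  assumes "simple_graph V E"
  shows "linear_forest V E \<longleftrightarrow> (\<exists>pos. circ_ordering V pos \<and> LF_free V E pos)"
proof
  assume lf: "linear_forest V E"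
  obtain pos where "bij_betw pos V {..<card V}" and sep: "P4_ends_separated V E pos"
    using separating_ordering_exists[OF assms lf subset_refl] simple_graph_edge_in[OF assms] by blast
  then have "circ_ordering V pos"
    unfolding circ_ordering_def by (simp add: lessThan_atLeast0)
  moreover have "LF_free V E pos"
    using LF_free_if_local[OF assms _ _ _ sep] triangle_free_if_linear_forest[OF assms lf]
      max_degree_2_if_linear_forest[OF assms lf] C4_free_if_linear_forest[OF assms lf] by blast
  ultimately show "\<exists>pos. circ_ordering V pos \<and> LF_free V E pos" by blast
next
  assume "\<exists>pos. circ_ordering V pos \<and> LF_free V E pos"
  then obtain pos where "inj_on pos V" and lf: "LF_free V E pos"
    unfolding circ_ordering_def bij_betw_def by blast
  have "one_degenerate V E"
    using one_degenerate_if_P4_ends_separated[OF assms] triangle_free_if_LF_free[OF assms \<open>inj_on pos V\<close> lf]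
      C4_free_if_LF_free[OF assms \<open>inj_on pos V\<close> lf] P4_ends_separated_if_LF_free[OF assms \<open>inj_on pos V\<close> lf]
    by blast
  then show "linear_forest V E"
    using linear_forest_if_one_degenerate[OF assms max_degree_2_if_LF_free[OF assms \<open>inj_on pos V\<close> lf]]
    by blast
qed

end
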